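(* Let $G$ be a bipartite graph and let $M$ be a maximum matching in $G$ such that $\mathrm{diss}(G)=\frac{4}{3}\alpha(G-M)$. Then $\alpha(G-M)=\alpha(G)$, the graphs $G$ and $G-M$ have the same matching number, and for every maximum dissociation set $I$ of $G$, the induced subgraph $G[I]$ is $1$-regular and exactly half of the edges of $G[I]$ belong to $M$ (so $|E(G[I])\cap M|=\frac{\mathrm{diss}(G)}{4}$).
   Context: All graphs are finite, simple and undirected. A set $I$ of vertices of a graph $G$ is a dissociation set if the induced subgraph $G[I]$ has maximum degree at most $1$; $\mathrm{diss}(G)$ is the maximum order of a dissociation set in $G$. $\alpha(H)$ denotes the independence number of $H$. For a set $M$ of edges, $G-M$ is the graph on $V(G)$ with edge set $E(G)\setminus M$. *)

theory Defs
  imports Complex_Main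
begin

definition simple_graph :: "'a set \<Rightarrow> 'a set set \<Rightarrow> bool" where
  "simple_graph V E \<longleftrightarrow> finite V \<and>
     (\<forall>e\<in>E. \<exists>u v. e = {u, v} \<and> u \<noteq> v \<and> u \<in> V \<and> v \<in> V)"

definition bipartite :: "'a set \<Rightarrow> 'a set set \<Rightarrow> bool" where
  "bipartite V E \<longleftrightarrow> (\<exists>A B. A \<union> B = V \<and> A \<inter> B = {} \<and>
     (\<forall>e\<in>E. card (e \<inter> A) = 1 \<and> card (e \<inter> B) = 1))"

definition matching :: "'a set set \<Rightarrow> 'a set set \<Rightarrow> bool" where
  "matching E M \<longleftrightarrow> M \<subseteq> E \<and> (\<forall>e\<in>M. \<forall>f\<in>M. e \<noteq> f \<longrightarrow> e \<inter> f = {})"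

definition max_matching :: "'a set set \<Rightarrow> 'a set set \<Rightarrow> bool" where
  "max_matching E M \<longleftrightarrow> matching E M \<and> (\<forall>M'. matching E M' \<longrightarrow> card M' \<le> card M)"

definition matching_number :: "'a set set \<Rightarrow> nat" where
  "matching_number E = Max {card M | M. matching E M}"

definition indep_set :: "'a set \<Rightarrow> 'a set set \<Rightarrow> 'a set \<Rightarrow> bool" where
  "indep_set V E S \<longleftrightarrow> S \<subseteq> V \<and> (\<forall>e\<in>E. \<not> e \<subseteq> S)"

definition alpha :: "'a set \<Rightarrow> 'a set set \<Rightarrow> nat" where
  "alpha V E = Max {card S | S. indep_set V E S}"

definition induced_edges :: "'a set set \<Rightarrow> 'a set \<Rightarrow> 'a set set" where
  "induced_edges E S = {e \<in> E. e \<subseteq> S}"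

definition induced_degree :: "'a set set \<Rightarrow> 'a set \<Rightarrow> 'a \<Rightarrow> nat" where
  "induced_degree E S v = card {e \<in> induced_edges E S. v \<in> e}"

definition diss_set :: "'a set \<Rightarrow> 'a set set \<Rightarrow> 'a set \<Rightarrow> bool" where
  "diss_set V E S \<longleftrightarrow> S \<subseteq> V \<and> (\<forall>v\<in>S. induced_degree E S v \<le> 1)"

definition diss :: "'a set \<Rightarrow> 'a set set \<Rightarrow> nat" where
  "diss V E = Max {card S | S. diss_set V E S}"

definition max_diss_set :: "'a set \<Rightarrow> 'a set set \<Rightarrow> 'a set \<Rightarrow> bool" where
  "max_diss_set V E S \<longleftrightarrow> diss_set V E S \<and> card S = diss V E"

end

theory Submission
  imports Defs
begin

text \<open>Let \<open>\<alpha>' = \<alpha>(G - M)\<close> and let \<open>I\<close> be a maximum dissociation set whose induced edges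
  consist of \<open>a\<close> edges of \<open>M\<close> and \<open>b\<close> other edges. Deleting one end of each non-\<open>M\<close> edge of \<open>G[I]\<close>
  leaves an independent set of \<open>G - M\<close>, so \<open>|I| \<le> \<alpha>' + b\<close>; every edge of \<open>M\<close> not inside \<open>I\<close>
  meets \<open>V - I\<close>, so \<open>|M| \<le> a + |V| - |I|\<close>; K\<ouml>nig's theorem for the bipartite graph \<open>G - M\<close>
  gives \<open>|V| \<le> \<alpha>' + |M|\<close>; and \<open>G[I]\<close> is a matching, so \<open>2(a + b) \<le> |I|\<close>. Together these
  give \<open>3|I| \<le> 4\<alpha>'\<close>, so under the hypothesis every estimate is an equality. This yields
  \<open>a = b\<close>, the 1-regularity of \<open>G[I]\<close>, and, with K\<ouml>nig's theorem for \<open>G\<close> and \<open>G - M\<close>, the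
  equalities for \<open>\<alpha>\<close> and the matching number.\<close>

lemma sdr_glue:
  assumes "S \<subseteq> X"
    and "inj_on f S" "\<forall>x\<in>S. f x \<in> N x \<inter> Y"
    and "inj_on g (X - S)" "\<forall>x\<in>X - S. g x \<in> N x - Y"
  shows "\<exists>h. inj_on h X \<and> (\<forall>x\<in>X. h x \<in> N x)"
proof -
  define h where "h x = (if x \<in> S then f x else g x)" for x
  have "inj_on h (S \<union> (X - S))"
    unfolding inj_on_Un using assms by (auto simp: h_def inj_on_def)
  moreover have "S \<union> (X - S) = X" using assms(1) by blast
  ultimately show ?thesis using assms(3,5) by (auto simp: h_def)
qed

lemma hall_condition_contract:
  assumes hall: "\<forall>T\<subseteq>X. card T \<le> card (\<Union>(N ` T))"
    and "finite X" "S \<subseteq> X" "card (\<Union>(N ` S)) = card S"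
  shows "\<forall>T\<subseteq>X - S. card T \<le> card (\<Union>x\<in>T. N x - \<Union>(N ` S))"
proof (intro allI impI)
  fix T assume T: "T \<subseteq> X - S"
  have "T \<union> S \<subseteq> X" using T assms(3) by blast
  then have "finite T" "finite S" using assms(2) by (auto intro: finite_subset)
  then have "card T + card S = card (T \<union> S)" using T by (subst card_Un_disjoint) auto
  also have "\<dots> \<le> card (\<Union>(N ` (T \<union> S)))" using hall \<open>T \<union> S \<subseteq> X\<close> by blast
  also have "\<Union>(N ` (T \<union> S)) = (\<Union>x\<in>T. N x - \<Union>(N ` S)) \<union> \<Union>(N ` S)" by auto
  also have "card \<dots> \<le> card (\<Union>x\<in>T. N x - \<Union>(N ` S)) + card S"
    using assms(4) by (metis card_Un_le)
  finally show "card T \<le> card (\<Union>x\<in>T. N x - \<Union>(N ` S))" by simp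
qed

lemma hall_condition_delete:
  assumes surplus: "\<forall>T. T \<noteq> {} \<and> T \<subset> X \<longrightarrow> card T < card (\<Union>(N ` T))"
    and "finite X" "\<forall>x\<in>X. finite (N x)" "x \<in> X"
  shows "\<forall>T\<subseteq>X - {x}. card T \<le> card (\<Union>z\<in>T. N z - {y})"
proof (intro allI impI)
  fix T assume T: "T \<subseteq> X - {x}"
  show "card T \<le> card (\<Union>z\<in>T. N z - {y})"
  proof (cases "T = {}")
    case False
    have "finite T" using T assms(2) finite_subset by blast
    then have "finite (\<Union>(N ` T))" using T assms(3) by auto
    then have "card (\<Union>(N ` T)) \<le> card (\<Union>(N ` T) - {y}) + 1"
      by (cases "y \<in> \<Union>(N ` T)") (auto simp: card_Diff_singleton)
    moreover have "card T < card (\<Union>(N ` T))" using surplus False T assms(4) by blast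
    moreover have "(\<Union>z\<in>T. N z - {y}) = \<Union>(N ` T) - {y}" by blast
    ultimately show ?thesis by simp
  qed simp
qed

theorem hall_marriage:
  assumes "finite X" "\<forall>x\<in>X. finite (N x)" "\<forall>T\<subseteq>X. card T \<le> card (\<Union>(N ` T))"
  shows "\<exists>f. inj_on f X \<and> (\<forall>x\<in>X. f x \<in> N x)"
  using assms
proof (induction "card X" arbitrary: X N rule: less_induct)
  case less
  consider "X = {}"
    | (critical) S where "S \<noteq> {}" "S \<subset> X" "card (\<Union>(N ` S)) = card S"
    | (surplus) x where "x \<in> X" "\<forall>T. T \<noteq> {} \<and> T \<subset> X \<longrightarrow> card T < card (\<Union>(N ` T))"
  proof (cases "\<exists>S. S \<noteq> {} \<and> S \<subset> X \<and> card (\<Union>(N ` S)) = card S")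
    case False
    then have "\<forall>T. T \<noteq> {} \<and> T \<subset> X \<longrightarrow> card T < card (\<Union>(N ` T))"
      using less.prems(3) by (metis le_neq_implies_less psubset_imp_subset)
    then show ?thesis using that(1,3) by blast
  qed (use that(2) in blast)
  then show ?case
  proof cases
    case critical
    have card_less: "finite S" "card S < card X" "card (X - S) < card X"
      using critical less.prems(1)
      by (auto intro: finite_subset psubset_card_mono simp: card_Diff_subset)
    obtain f where "inj_on f S" "\<forall>x\<in>S. f x \<in> N x"
      using less.hyps[of S N] critical less.prems card_less by auto
    moreover obtain g where "inj_on g (X - S)" "\<forall>x\<in>X - S. g x \<in> N x - \<Union>(N ` S)"
      using less.hyps[of "X - S" "\<lambda>x. N x - \<Union>(N ` S)"] hall_condition_contract[of X N S]
        critical less.prems card_less by auto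
    ultimately show ?thesis by (intro sdr_glue[of S X f N "\<Union>(N ` S)" g]) (use critical in auto)
  next
    case surplus
    have "card {x} \<le> card (\<Union>(N ` {x}))"
      using less.prems(3)[rule_format, of "{x}"] surplus(1) by simp
    then obtain y where y: "y \<in> N x" by fastforce
    have "card (X - {x}) < card X" using surplus(1) less.prems(1) by (rule card_Diff1_less[rotated])
    then obtain g where "inj_on g (X - {x})" "\<forall>z\<in>X - {x}. g z \<in> N z - {y}"
      using less.hyps[of "X - {x}" "\<lambda>z. N z - {y}"] hall_condition_delete[of X N x y]
        surplus less.prems by auto
    with y surplus(1) show ?thesis by (intro sdr_glue[of "{x}" X "\<lambda>_. y" N "{y}" g]) auto
  qed simp
qed

lemma simple_graphD:
  assumes "simple_graph V E"
  shows "finite V" "finite E" "\<And>e. e \<in> E \<Longrightarrow> e \<subseteq> V" "\<And>e. e \<in> E \<Longrightarrow> card e = 2"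
proof -
  show "finite V" "\<And>e. e \<in> E \<Longrightarrow> e \<subseteq> V" "\<And>e. e \<in> E \<Longrightarrow> card e = 2"
    using assms unfolding simple_graph_def by fastforce+
  then show "finite E" by (meson Pow_iff finite_Pow_iff finite_subset subsetI)
qed

lemma bipartite_edge:
  assumes "e \<subseteq> A \<union> B" "card (e \<inter> A) = 1" "card (e \<inter> B) = 1"
  shows "\<exists>a\<in>A. \<exists>b\<in>B. e = {a, b}"
proof -
  obtain a b where "e \<inter> A = {a}" "e \<inter> B = {b}"
    using assms(2,3) by (metis One_nat_def card_1_singleton_iff)
  moreover have "e = e \<inter> A \<union> e \<inter> B" using assms(1) by blast
  ultimately show ?thesis by blast
qed

lemma
  assumes "finite U" "\<And>S. P S \<Longrightarrow> S \<subseteq> U"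
  shows Max_card_attained: "P S0 \<Longrightarrow> \<exists>S. P S \<and> card S = Max {card S | S. P S}"
    and card_le_Max_card: "P S \<Longrightarrow> card S \<le> Max {card S | S. P S}"
proof -
  have "{card S | S. P S} \<subseteq> {..card U}"
    using assms by (auto intro: card_mono)
  then have fin: "finite {card S | S. P S}" by (rule finite_subset) simp
  show "\<exists>S. P S \<and> card S = Max {card S | S. P S}" if "P S0"
  proof -
    have "Max {card S | S. P S} \<in> {card S | S. P S}"
      using fin that by (intro Max_in) auto
    then show ?thesis by auto
  qed
  show "P S \<Longrightarrow> card S \<le> Max {card S | S. P S}"
    using fin by (intro Max_ge) auto
qed

lemma alpha_attained:
  assumes "finite V" "\<And>e. e \<in> E \<Longrightarrow> e \<noteq> {}"
  shows "\<exists>S. indep_set V E S \<and> card S = alpha V E"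
  unfolding alpha_def
  by (rule Max_card_attained[of V _ "{}"]) (use assms in \<open>auto simp: indep_set_def\<close>)

lemma card_le_alpha: "finite V \<Longrightarrow> indep_set V E S \<Longrightarrow> card S \<le> alpha V E"
  unfolding alpha_def by (rule card_le_Max_card[of V]) (auto simp: indep_set_def)

lemma matching_number_attained: "finite E \<Longrightarrow> \<exists>N. matching E N \<and> card N = matching_number E"
  unfolding matching_number_def
  by (rule Max_card_attained[of E _ "{}"]) (auto simp: matching_def)

lemma card_le_matching_number: "finite E \<Longrightarrow> matching E N \<Longrightarrow> card N \<le> matching_number E"
  unfolding matching_number_def by (rule card_le_Max_card[of E]) (auto simp: matching_def)

lemma max_matching_card:
  assumes "finite E" "max_matching E M"
  shows "matching_number E = card M" "E' \<subseteq> E \<Longrightarrow> matching_number E' \<le> card M"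
proof -
  obtain N where "matching E N" "card N = matching_number E"
    using matching_number_attained[OF assms(1)] by blast
  then show "matching_number E = card M"
    using assms(2) card_le_matching_number[OF assms(1), of M] unfolding max_matching_def
    by (metis le_antisym)
  assume "E' \<subseteq> E"
  then have "finite E'" using assms(1) by (rule finite_subset)
  then obtain N' where "matching E' N'" "card N' = matching_number E'"
    using matching_number_attained by blast
  moreover have "matching E N'" using \<open>matching E' N'\<close> \<open>E' \<subseteq> E\<close> by (auto simp: matching_def)
  ultimately show "matching_number E' \<le> card M" using assms(2) by (auto simp: max_matching_def)
qed

lemma max_diss_set_exists: "finite V \<Longrightarrow> \<exists>I. max_diss_set V E I"
  unfolding max_diss_set_def diss_def
  by (rule Max_card_attained[of V _ "{}"]) (auto simp: diss_set_def)

lemma card_matching_le: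
  assumes "finite V" "\<And>e. e \<in> E \<Longrightarrow> e \<subseteq> V" "matching E N" "S \<subseteq> V"
  shows "card N \<le> card (N \<inter> induced_edges E S) + card (V - S)"
proof -
  let ?K = "induced_edges E S"
  have "\<forall>e\<in>N - ?K. \<exists>x. x \<in> e - S"
    using assms(3) by (auto simp: matching_def induced_edges_def)
  then obtain h where h: "\<And>e. e \<in> N - ?K \<Longrightarrow> h e \<in> e - S" by metis
  have "inj_on h (N - ?K)"
  proof (rule inj_onI)
    fix e f assume ef: "e \<in> N - ?K" "f \<in> N - ?K" "h e = h f"
    then have "h e \<in> e \<inter> f" using h by (metis DiffD1 IntI)
    then show "e = f" using assms(3) ef(1,2) unfolding matching_def by blast
  qed
  moreover have "h ` (N - ?K) \<subseteq> V - S"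
    using h assms(2,3) by (fastforce simp: matching_def)
  ultimately have "card (N - ?K) \<le> card (V - S)"
    using assms(1) by (intro card_inj_on_le) auto
  moreover have "card N \<le> card (N \<inter> ?K) + card (N - ?K)"
    using card_Un_le[of "N \<inter> ?K" "N - ?K"] by (simp add: Int_Diff_Un)
  ultimately show ?thesis by linarith
qed

lemma indep_matching_card_le:
  assumes "finite V" "\<And>e. e \<in> E \<Longrightarrow> e \<subseteq> V" "indep_set V E S" "matching E N"
  shows "card S + card N \<le> card V"
proof -
  have "S \<subseteq> V" "N \<inter> induced_edges E S = {}"
    using assms(3) by (auto simp: indep_set_def induced_edges_def)
  then show ?thesis
    using card_matching_le[OF assms(1,2,4), of S] card_mono[OF assms(1)] card_Diff_subset[of S V]
      finite_subset[OF _ assms(1)] by fastforce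
qed

lemma matching_of_injection:
  assumes "inj_on h X" "\<forall>x\<in>X. {x, h x} \<in> E" "X \<inter> h ` X = {}"
  shows "matching E ((\<lambda>x. {x, h x}) ` X)" "card ((\<lambda>x. {x, h x}) ` X) = card X"
proof -
  have disjoint: "{x, h x} \<inter> {y, h y} = {}" if "x \<in> X" "y \<in> X" "x \<noteq> y" for x y
  proof -
    have "h x \<noteq> h y" using assms(1) that by (auto dest: inj_onD)
    moreover have "x \<noteq> h y" "h x \<noteq> y" using assms(3) that by blast+
    ultimately show ?thesis using \<open>x \<noteq> y\<close> by auto
  qed
  show "matching E ((\<lambda>x. {x, h x}) ` X)"
    unfolding matching_def
  proof (intro conjI ballI impI)
    show "(\<lambda>x. {x, h x}) ` X \<subseteq> E" using assms(2) by blast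
    fix e f assume "e \<in> (\<lambda>x. {x, h x}) ` X" "f \<in> (\<lambda>x. {x, h x}) ` X" "e \<noteq> f"
    then obtain x y where "x \<in> X" "y \<in> X" "x \<noteq> y" "e = {x, h x}" "f = {y, h y}" by blast
    with disjoint show "e \<inter> f = {}" by blast
  qed
  have "inj_on (\<lambda>x. {x, h x}) X"
    using assms(3) by (auto intro!: inj_onI simp: doubleton_eq_iff)
  then show "card ((\<lambda>x. {x, h x}) ` X) = card X" by (rule card_image)
qed

definition nbhd :: "'a set set \<Rightarrow> 'a set \<Rightarrow> 'a set" where
  "nbhd E S = {b. \<exists>a\<in>S. {a, b} \<in> E}"

context
  fixes A B :: "'a set" and E :: "'a set set"
  assumes finite_parts: "finite A" "finite B"
    and disjoint_parts: "A \<inter> B = {}"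
    and edges_across: "\<forall>e\<in>E. \<exists>a\<in>A. \<exists>b\<in>B. e = {a, b}"
begin

lemma edge_across: "{a, b} \<in> E \<Longrightarrow> a \<in> A \<Longrightarrow> b \<in> B"
  using edges_across disjoint_parts by (fastforce simp: doubleton_eq_iff)

lemma nbhd_subset: "S \<subseteq> A \<Longrightarrow> nbhd E S \<subseteq> B"
  using edge_across by (auto simp: nbhd_def)

lemma finite_nbhd: "S \<subseteq> A \<Longrightarrow> finite (nbhd E S)"
  using nbhd_subset finite_parts(2) by (rule finite_subset)

lemma hall_condition_off_minimizer:
  assumes "S0 \<subseteq> A"
    and min: "\<And>S. S \<subseteq> A \<Longrightarrow> card (A - S0) + card (nbhd E S0) \<le> card (A - S) + card (nbhd E S)"
  shows "\<forall>T\<subseteq>A - S0. card T \<le> card (\<Union>a\<in>T. nbhd E {a} - nbhd E S0)"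
proof (intro allI impI)
  fix T assume T: "T \<subseteq> A - S0"
  then have "finite T" using finite_parts(1) by (meson Diff_subset finite_subset subset_trans)
  have "card (A - S0) = card ((A - (S0 \<union> T)) \<union> T)"
    using T by (intro arg_cong[where f = card]) auto
  also have "\<dots> = card (A - (S0 \<union> T)) + card T"
    by (rule card_Un_disjoint) (use \<open>finite T\<close> finite_parts(1) in auto)
  finally have "card (A - S0) = card (A - (S0 \<union> T)) + card T" .
  moreover have "card (nbhd E (S0 \<union> T)) = card (nbhd E S0 \<union> (nbhd E T - nbhd E S0))"
    by (intro arg_cong[where f = card]) (auto simp: nbhd_def)
  moreover have "\<dots> = card (nbhd E S0) + card (nbhd E T - nbhd E S0)"
    using T \<open>S0 \<subseteq> A\<close> by (intro card_Un_disjoint) (auto intro: finite_nbhd)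
  moreover have "(\<Union>a\<in>T. nbhd E {a} - nbhd E S0) = nbhd E T - nbhd E S0"
    by (auto simp: nbhd_def)
  ultimately show "card T \<le> card (\<Union>a\<in>T. nbhd E {a} - nbhd E S0)"
    using min[of "S0 \<union> T"] T \<open>S0 \<subseteq> A\<close> by auto
qed

lemma hall_condition_on_minimizer:
  assumes "S0 \<subseteq> A"
    and min: "\<And>S. S \<subseteq> A \<Longrightarrow> card (A - S0) + card (nbhd E S0) \<le> card (A - S) + card (nbhd E S)"
  shows "\<forall>U\<subseteq>nbhd E S0. card U \<le> card (\<Union>b\<in>U. {a \<in> S0. {a, b} \<in> E})"
proof (intro allI impI)
  fix U assume U: "U \<subseteq> nbhd E S0"
  define W where "W = (\<Union>b\<in>U. {a \<in> S0. {a, b} \<in> E})"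
  have "W \<subseteq> S0" by (auto simp: W_def)
  then have "finite W" using \<open>S0 \<subseteq> A\<close> finite_parts(1) by (meson finite_subset subset_trans)
  have "card (A - (S0 - W)) = card ((A - S0) \<union> W)"
    using \<open>W \<subseteq> S0\<close> \<open>S0 \<subseteq> A\<close> by (intro arg_cong[where f = card]) auto
  also have "\<dots> = card (A - S0) + card W"
    by (rule card_Un_disjoint) (use \<open>W \<subseteq> S0\<close> \<open>finite W\<close> finite_parts(1) in auto)
  finally have "card (A - (S0 - W)) = card (A - S0) + card W" .
  moreover have "card (nbhd E (S0 - W)) + card U \<le> card (nbhd E S0)"
  proof -
    have "nbhd E (S0 - W) \<subseteq> nbhd E S0 - U" by (auto simp: nbhd_def W_def)
    then have "card (nbhd E (S0 - W)) \<le> card (nbhd E S0 - U)"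
      using finite_nbhd[OF \<open>S0 \<subseteq> A\<close>] by (intro card_mono) auto
    moreover have "card (nbhd E S0 - U) + card U = card (nbhd E S0)"
      using U finite_nbhd[OF \<open>S0 \<subseteq> A\<close>] by (metis card_Diff_subset card_mono finite_subset le_add_diff_inverse2)
    ultimately show ?thesis by linarith
  qed
  moreover have "S0 - W \<subseteq> A" using \<open>S0 \<subseteq> A\<close> by blast
  ultimately show "card U \<le> card W" using min[of "S0 - W"] by linarith
qed

lemma matching_from_two_injections:
  assumes "S0 \<subseteq> A"
    and f: "inj_on f (A - S0)" "\<forall>a\<in>A - S0. f a \<in> nbhd E {a} - nbhd E S0"
    and g: "inj_on g (nbhd E S0)" "\<forall>b\<in>nbhd E S0. g b \<in> {a \<in> S0. {a, b} \<in> E}"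
  shows "\<exists>N. matching E N \<and> card N = card ((A - S0) \<union> nbhd E S0)"
proof -
  define C where "C = (A - S0) \<union> nbhd E S0"
  define h where "h x = (if x \<in> A then f x else g x)" for x
  have "nbhd E S0 \<subseteq> B" using nbhd_subset[OF \<open>S0 \<subseteq> A\<close>] .
  then have h_eq: "\<forall>a\<in>A - S0. h a = f a" "\<forall>b\<in>nbhd E S0. h b = g b"
    using disjoint_parts by (auto simp: h_def)
  have "f a \<in> B - nbhd E S0" if "a \<in> A - S0" for a
    using f(2) that nbhd_subset[of "{a}"] by blast
  then have h_img: "h ` (A - S0) \<subseteq> B - nbhd E S0" "h ` nbhd E S0 \<subseteq> S0"
    using h_eq g(2) by auto
  have "inj_on h (A - S0)" "inj_on h (nbhd E S0)"
    using f(1) g(1) h_eq by (simp_all add: inj_on_def)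
  moreover have "h ` (A - S0) \<inter> h ` nbhd E S0 = {}"
    using h_img \<open>S0 \<subseteq> A\<close> disjoint_parts by blast
  ultimately have "inj_on h C"
    unfolding C_def inj_on_Un by blast
  moreover have "\<forall>x\<in>C. {x, h x} \<in> E"
  proof
    fix x assume "x \<in> C"
    then consider "x \<in> A - S0" | "x \<in> nbhd E S0" unfolding C_def by blast
    then show "{x, h x} \<in> E"
      by cases (use f(2) g(2) h_eq in \<open>auto simp: nbhd_def insert_commute\<close>)
  qed
  moreover have "C \<inter> h ` C = {}"
    using h_img \<open>nbhd E S0 \<subseteq> B\<close> \<open>S0 \<subseteq> A\<close> disjoint_parts unfolding C_def image_Un by blast
  ultimately have "matching E ((\<lambda>x. {x, h x}) ` C)" "card ((\<lambda>x. {x, h x}) ` C) = card C"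
    by (rule matching_of_injection)+
  then show ?thesis unfolding C_def by blast
qed

text \<open>The set \<open>S0\<close> minimising the deficiency \<open>|A - S| + |N(S)|\<close> yields the vertex cover
  \<open>(A - S0) \<union> N(S0)\<close>; by minimality both halves satisfy Hall's condition towards the other side,
  which produces a matching of the same size.\<close>

lemma konig_cover:
  "\<exists>S N. indep_set (A \<union> B) E S \<and> matching E N \<and> card (A \<union> B) \<le> card S + card N"
proof -
  obtain S0 where "S0 \<subseteq> A" and min:
    "\<And>S. S \<subseteq> A \<Longrightarrow> card (A - S0) + card (nbhd E S0) \<le> card (A - S) + card (nbhd E S)"
    using ex_has_least_nat[of "\<lambda>S. S \<subseteq> A" "{}" "\<lambda>S. card (A - S) + card (nbhd E S)"] by blast
  have "finite (A - S0)" "\<forall>a\<in>A - S0. finite (nbhd E {a} - nbhd E S0)"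
    using finite_parts(1) finite_nbhd by auto
  from hall_marriage[OF this hall_condition_off_minimizer[OF \<open>S0 \<subseteq> A\<close> min]]
  obtain f where f: "inj_on f (A - S0)" "\<forall>a\<in>A - S0. f a \<in> nbhd E {a} - nbhd E S0"
    by blast
  have "finite S0" using \<open>S0 \<subseteq> A\<close> finite_parts(1) by (rule finite_subset)
  then have "finite (nbhd E S0)" "\<forall>b\<in>nbhd E S0. finite {a \<in> S0. {a, b} \<in> E}"
    using finite_nbhd[OF \<open>S0 \<subseteq> A\<close>] by auto
  from hall_marriage[OF this hall_condition_on_minimizer[OF \<open>S0 \<subseteq> A\<close> min]]
  obtain g where g: "inj_on g (nbhd E S0)" "\<forall>b\<in>nbhd E S0. g b \<in> {a \<in> S0. {a, b} \<in> E}"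
    by blast
  define C where "C = (A - S0) \<union> nbhd E S0"
  obtain N where "matching E N" "card N = card C"
    using matching_from_two_injections[OF \<open>S0 \<subseteq> A\<close> f g] unfolding C_def by blast
  moreover have "indep_set (A \<union> B) E (A \<union> B - C)"
    using edges_across by (fastforce simp: indep_set_def C_def nbhd_def)
  moreover have "card (A \<union> B) = card (A \<union> B - C) + card C"
  proof -
    have "(A \<union> B) \<inter> C = C" using nbhd_subset[OF \<open>S0 \<subseteq> A\<close>] by (auto simp: C_def)
    then show ?thesis using card_Int_Diff[of "A \<union> B" C] finite_parts by simp
  qed
  ultimately show ?thesis by (metis order_refl)
qed

theorem konig_egervary: "alpha (A \<union> B) E + matching_number E = card (A \<union> B)"
proof -
  have "finite (A \<union> B)" using finite_parts by simp
  moreover have edge_sub: "\<And>e. e \<in> E \<Longrightarrow> e \<subseteq> A \<union> B" and "\<And>e. e \<in> E \<Longrightarrow> e \<noteq> {}"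
    using edges_across by auto
  moreover have "finite E"
    using edge_sub \<open>finite (A \<union> B)\<close> by (meson Pow_iff finite_Pow_iff finite_subset subsetI)
  ultimately obtain S N where "indep_set (A \<union> B) E S" "card S = alpha (A \<union> B) E"
    "matching E N" "card N = matching_number E"
    using alpha_attained matching_number_attained by metis
  then have "alpha (A \<union> B) E + matching_number E \<le> card (A \<union> B)"
    using indep_matching_card_le \<open>finite (A \<union> B)\<close> edge_sub by metis
  moreover obtain S' N' where "indep_set (A \<union> B) E S'" "matching E N'"
    "card (A \<union> B) \<le> card S' + card N'"
    using konig_cover by blast
  then have "card (A \<union> B) \<le> alpha (A \<union> B) E + matching_number E"
    using card_le_alpha[OF \<open>finite (A \<union> B)\<close>] card_le_matching_number[OF \<open>finite E\<close>]
    by (meson add_le_mono le_trans)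
  ultimately show ?thesis by linarith
qed

end

lemma matching_induced_edges:
  assumes "finite E" "diss_set V E I"
  shows "matching E (induced_edges E I)"
  unfolding matching_def
proof (intro conjI ballI impI)
  show "induced_edges E I \<subseteq> E" by (auto simp: induced_edges_def)
next
  fix e f assume ef: "e \<in> induced_edges E I" "f \<in> induced_edges E I" "e \<noteq> f"
  show "e \<inter> f = {}"
  proof (rule ccontr)
    assume "e \<inter> f \<noteq> {}"
    then obtain v where "v \<in> e" "v \<in> f" by blast
    then have "v \<in> I" "{e, f} \<subseteq> {e \<in> induced_edges E I. v \<in> e}"
      using ef by (auto simp: induced_edges_def)
    moreover have "finite {e \<in> induced_edges E I. v \<in> e}"
      using assms(1) by (simp add: induced_edges_def)
    ultimately have "card {e, f} \<le> induced_degree E I v"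
      unfolding induced_degree_def by (intro card_mono) auto
    then have "2 \<le> induced_degree E I v" using ef(3) by simp
    then show False using \<open>v \<in> I\<close> assms(2) by (auto simp: diss_set_def)
  qed
qed

lemma card_Union_matching:
  assumes "matching E N" "\<And>e. e \<in> E \<Longrightarrow> card e = 2"
  shows "card (\<Union>N) = 2 * card N"
proof -
  have two: "\<And>e. e \<in> N \<Longrightarrow> card e = 2" using assms unfolding matching_def by blast
  have "card (\<Union>N) = sum card N"
    using assms(1) two
    by (intro card_Union_disjoint) (auto simp: matching_def pairwise_def disjnt_def intro: card_ge_0_finite)
  also have "\<dots> = 2 * card N" using two by simp
  finally show ?thesis .
qed

lemma
  assumes "finite V" "finite E" "\<And>e. e \<in> E \<Longrightarrow> card e = 2" "diss_set V E I"
  shows diss_set_card_induced_edges: "2 * card (induced_edges E I) \<le> card I"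
    and diss_set_one_regular:
      "2 * card (induced_edges E I) = card I \<Longrightarrow> \<forall>v\<in>I. induced_degree E I v = 1"
proof -
  let ?K = "induced_edges E I"
  have "finite I" using assms(1,4) finite_subset by (auto simp: diss_set_def)
  have "\<Union>?K \<subseteq> I" by (auto simp: induced_edges_def)
  have card_UK: "card (\<Union>?K) = 2 * card ?K"
    using matching_induced_edges[OF assms(2,4)] assms(3) by (rule card_Union_matching)
  then show "2 * card ?K \<le> card I"
    using card_mono[OF \<open>finite I\<close> \<open>\<Union>?K \<subseteq> I\<close>] by simp
  show "\<forall>v\<in>I. induced_degree E I v = 1" if "2 * card ?K = card I"
  proof
    fix v assume "v \<in> I"
    have "\<Union>?K = I" using card_subset_eq[OF \<open>finite I\<close> \<open>\<Union>?K \<subseteq> I\<close>] card_UK that by simp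
    then have "{e \<in> ?K. v \<in> e} \<noteq> {}" using \<open>v \<in> I\<close> by blast
    moreover have "finite {e \<in> ?K. v \<in> e}" using assms(2) by (simp add: induced_edges_def)
    ultimately have "induced_degree E I v \<noteq> 0" by (simp add: induced_degree_def)
    then show "induced_degree E I v = 1"
      using \<open>v \<in> I\<close> assms(4) by (fastforce simp: diss_set_def)
  qed
qed

lemma card_le_alpha_plus_induced_edges:
  assumes "finite V" "\<And>e. e \<in> E \<Longrightarrow> e \<noteq> {}" "S \<subseteq> V"
  shows "card S \<le> alpha V E + card (induced_edges E S)"
proof -
  let ?K = "induced_edges E S"
  obtain h where h: "\<And>e. e \<in> E \<Longrightarrow> h e \<in> e" using assms(2) by (metis ex_in_conv)
  have "finite S" using assms(1,3) by (rule finite_subset[rotated])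
  have "?K \<subseteq> Pow S" by (auto simp: induced_edges_def)
  then have "finite ?K" using \<open>finite S\<close> finite_subset by auto
  have "\<not> e \<subseteq> S - h ` ?K" if "e \<in> E" for e
  proof
    assume "e \<subseteq> S - h ` ?K"
    then have "e \<in> ?K" using that by (auto simp: induced_edges_def)
    then show False using h[OF that] \<open>e \<subseteq> S - h ` ?K\<close> by blast
  qed
  then have "indep_set V E (S - h ` ?K)" using assms(3) by (auto simp: indep_set_def)
  then have "card (S - h ` ?K) \<le> alpha V E" using assms(1) by (rule card_le_alpha[rotated])
  moreover have "card S \<le> card ((S - h ` ?K) \<union> h ` ?K)"
    using \<open>finite S\<close> \<open>finite ?K\<close> by (intro card_mono) auto
  moreover have "\<dots> \<le> card (S - h ` ?K) + card (h ` ?K)" by (rule card_Un_le)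
  moreover have "card (h ` ?K) \<le> card ?K" using \<open>finite ?K\<close> by (rule card_image_le)
  ultimately show ?thesis by linarith
qed

lemma max_diss_set_extremal:
  assumes "simple_graph V E" "matching E M"
    and cover: "card V \<le> alpha V (E - M) + card M"
    and ratio: "3 * diss V E = 4 * alpha V (E - M)"
    and "max_diss_set V E I"
  shows "card V = alpha V (E - M) + card M \<and> (\<forall>v\<in>I. induced_degree E I v = 1) \<and>
    2 * card (induced_edges E I \<inter> M) = card (induced_edges E I) \<and>
    4 * card (induced_edges E I \<inter> M) = diss V E"
proof -
  let ?K = "induced_edges E I"
  have "finite V" "finite E" and edge: "\<And>e. e \<in> E \<Longrightarrow> e \<subseteq> V" "\<And>e. e \<in> E \<Longrightarrow> card e = 2"
    using simple_graphD[OF assms(1)] by auto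
  have "diss_set V E I" "card I = diss V E" "I \<subseteq> V"
    using assms(5) by (auto simp: max_diss_set_def diss_set_def)
  have "finite ?K" using \<open>finite E\<close> by (simp add: induced_edges_def)
  then have K_split: "card ?K = card (?K \<inter> M) + card (?K - M)" by (rule card_Int_Diff)
  have "card I \<le> alpha V (E - M) + card (?K - M)"
  proof -
    have "induced_edges (E - M) I = ?K - M" by (auto simp: induced_edges_def)
    moreover have "\<And>e. e \<in> E - M \<Longrightarrow> e \<noteq> {}" using edge(2) by fastforce
    ultimately show ?thesis
      using card_le_alpha_plus_induced_edges[OF \<open>finite V\<close> _ \<open>I \<subseteq> V\<close>] by metis
  qed
  moreover have "card M \<le> card (?K \<inter> M) + (card V - card I)"
    using card_matching_le[OF \<open>finite V\<close> edge(1) assms(2) \<open>I \<subseteq> V\<close>]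
      card_Diff_subset[OF finite_subset[OF \<open>I \<subseteq> V\<close> \<open>finite V\<close>] \<open>I \<subseteq> V\<close>]
    by (simp add: Int_commute)
  moreover have "card I \<le> card V" using card_mono[OF \<open>finite V\<close> \<open>I \<subseteq> V\<close>] .
  moreover have "2 * card ?K \<le> card I"
    using diss_set_card_induced_edges[OF \<open>finite V\<close> \<open>finite E\<close> edge(2) \<open>diss_set V E I\<close>] .
  ultimately have tight: "2 * card ?K = card I" and "2 * card (?K \<inter> M) = card ?K"
    "4 * card (?K \<inter> M) = card I" "card V = alpha V (E - M) + card M"
    using cover ratio K_split \<open>card I = diss V E\<close> by linarith+
  moreover have "\<forall>v\<in>I. induced_degree E I v = 1"
    using diss_set_one_regular[OF \<open>finite V\<close> \<open>finite E\<close> _ \<open>diss_set V E I\<close> tight] edge(2) by blast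
  ultimately show ?thesis using \<open>card I = diss V E\<close> by simp
qed

theorem mainTheorem3:
  fixes V :: "'a set" and E M :: "'a set set"
  assumes "simple_graph V E"
    and "bipartite V E"
    and "max_matching E M"
    and "real (diss V E) = 4 / 3 * real (alpha V (E - M))"
  shows "alpha V (E - M) = alpha V E \<and>
         matching_number E = matching_number (E - M) \<and>
         (\<forall>I. max_diss_set V E I \<longrightarrow>
           (\<forall>v\<in>I. induced_degree E I v = 1) \<and>
           2 * card (induced_edges E I \<inter> M) = card (induced_edges E I) \<and>
           4 * card (induced_edges E I \<inter> M) = diss V E)"
proof -
  have "finite V" "finite E" and edge: "\<And>e. e \<in> E \<Longrightarrow> e \<subseteq> V"
    using simple_graphD[OF assms(1)] by auto
  obtain A B where AB: "A \<union> B = V" "A \<inter> B = {}" and across: "\<forall>e\<in>E. \<exists>a\<in>A. \<exists>b\<in>B. e = {a, b}"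
    using assms(2) edge bipartite_edge unfolding bipartite_def by metis
  have "finite A" "finite B" using \<open>finite V\<close> AB(1) by auto
  then have konig: "alpha V E + matching_number E = card V"
    "alpha V (E - M) + matching_number (E - M) = card V"
    using konig_egervary[of A B] AB across by auto
  have nu: "matching_number E = card M" "matching_number (E - M) \<le> card M"
    using max_matching_card[OF \<open>finite E\<close> assms(3)] by auto
  have "matching E M" using assms(3) by (simp add: max_matching_def)
  have ratio: "3 * diss V E = 4 * alpha V (E - M)"
    using assms(4) by (simp add: field_simps flip: of_nat_mult of_nat_eq_iff)
  have cover: "card V \<le> alpha V (E - M) + card M" using konig(2) nu(2) by linarith
  note extremal = max_diss_set_extremal[OF assms(1) \<open>matching E M\<close> cover ratio]
  obtain I0 where "max_diss_set V E I0" using max_diss_set_exists[OF \<open>finite V\<close>] ..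
  then have "card V = alpha V (E - M) + card M" using extremal by blast
  then have "alpha V (E - M) = alpha V E" "matching_number E = matching_number (E - M)"
    using konig nu by linarith+
  then show ?thesis using extremal by blast
qed

end
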